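(* Fix $C<e^{-1}$ and $\theta>0$. There are positive constants $M$ and $L_2$ such that \[ \mathbb{P}\Big(\bigcap_{1\le j\le n}\{\#\mathcal{E}_j\le M\log n\}\Big)\ \ge\ 1-\frac{1}{n^{\theta}} \] for all $n\ge L_2$.
   Context: Let $C>0$ be a constant and $(\alpha_n)_{n\ge1}$ a sequence of nonnegative reals with $\alpha_n\to0$. For each $n$, consider the complete graph $K_n$ on vertex set $\{1,\dots,n\}$; each edge $e$ of $K_n$ is independently open with probability $p_n(e)$ and closed otherwise, where $\frac{C-\alpha_n}{n}\le p_n(e)\le\frac{C+\alpha_n}{n}$ for every edge $e$. Let $G$ be the resulting random graph of open edges, with probability measure $\mathbb{P}$. For a vertex $i$, $\mathcal{E}_i$ denotes the open component of $G$ containing $i$ (the set of vertices joined to $i$ by a path of open edges, together with $i$ itself), and $\#\mathcal{E}_i$ its number of vertices. $\log$ is the natural logarithm. *)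

theory Defs
  imports "HOL-Probability.Probability"
begin

definition Kn_edges :: "nat \<Rightarrow> nat set set" where
  "Kn_edges n = {{i, j} | i j. i \<in> {1..n} \<and> j \<in> {1..n} \<and> i \<noteq> j}"

definition open_adj :: "nat \<Rightarrow> (nat set \<Rightarrow> bool) \<Rightarrow> nat \<Rightarrow> nat \<Rightarrow> bool" where
  "open_adj n \<omega> i j \<longleftrightarrow> i \<in> {1..n} \<and> j \<in> {1..n} \<and> i \<noteq> j \<and> \<omega> {i, j}"

definition open_component :: "nat \<Rightarrow> (nat set \<Rightarrow> bool) \<Rightarrow> nat \<Rightarrow> nat set" where
  "open_component n \<omega> i = {j. (open_adj n \<omega>)\<^sup>*\<^sup>* i j}"

definition random_graph :: "nat \<Rightarrow> (nat set \<Rightarrow> real) \<Rightarrow> (nat set \<Rightarrow> bool) pmf" where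
  "random_graph n p = Pi_pmf (Kn_edges n) False (\<lambda>e. bernoulli_pmf (p e))"

end

theory Submission
  imports Defs
begin

text \<open>
  First-moment argument. If the open component of a vertex \<open>j\<close> has at least \<open>k\<close> vertices, it
  contains an open tree on \<open>k\<close> vertices rooted at \<open>j\<close>, described by its parent map. There are at
  most \<open>n \<cdot> (n choose k) \<cdot> k^(k-1) \<le> e n^2 (e n)^(k-1)\<close> pairs of a root and a parent map, and
  when every edge is open with probability at most \<open>c/n\<close> each of the \<open>k - 1\<close> edges is open with
  probability at most \<open>c/n\<close>. So a component of size \<open>k\<close> exists with probability at most
  \<open>e n^2 (e c)^(k-1)\<close>, which decays geometrically in \<open>k\<close> once \<open>C < c < 1/e\<close>; taking
  \<open>k \<approx> M log n\<close> with \<open>M = (3 + \<theta>) / (- log (e c))\<close> makes it at most \<open>n^(-\<theta>)\<close>.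
\<close>

lemma rtranclp_leaves_set:
  assumes "R\<^sup>*\<^sup>* a b" "a \<in> S" "b \<notin> S"
  shows "\<exists>u w. u \<in> S \<and> w \<notin> S \<and> R u w \<and> R\<^sup>*\<^sup>* a u"
  using assms by (induction rule: rtranclp_induct) (blast, metis rtranclp.rtrancl_into_rtrancl)

text \<open>
  The tree is grown one edge at a time; the height \<open>h\<close> strictly decreasing along the parent map
  \<open>f\<close> rules out 2-cycles, so the edges \<open>{v, f v}\<close> are pairwise distinct.
\<close>
lemma exists_parent_map:
  fixes R :: "'a \<Rightarrow> 'a \<Rightarrow> bool"
  assumes fin: "finite {x. R\<^sup>*\<^sup>* j x}" and sym: "\<And>a b. R a b \<Longrightarrow> R b a"
    and "1 \<le> m" "m \<le> card {x. R\<^sup>*\<^sup>* j x}"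
  shows "\<exists>S f h. S \<subseteq> {x. R\<^sup>*\<^sup>* j x} \<and> j \<in> S \<and> card S = m \<and> f \<in> (S - {j}) \<rightarrow>\<^sub>E S \<and>
     (\<forall>v\<in>S-{j}. R v (f v) \<and> h (f v) < (h v::nat))"
  using assms(3,4)
proof (induction m)
  case 0
  then show ?case by simp
next
  case (Suc m)
  show ?case
  proof (cases "m = 0")
    case True
    then show ?thesis
      by (intro exI[of _ "{j}"] exI[of _ "\<lambda>_. undefined"]) auto
  next
    case False
    then obtain S f h where S: "S \<subseteq> {x. R\<^sup>*\<^sup>* j x}" "j \<in> S" "card S = m" "f \<in> (S - {j}) \<rightarrow>\<^sub>E S"
       "\<forall>v\<in>S-{j}. R v (f v) \<and> h (f v) < (h v::nat)"
      using Suc.IH Suc.prems False by (metis Suc_leD less_one not_less)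
    have finS: "finite S"
      using S(1) fin finite_subset by blast
    have "\<not> {x. R\<^sup>*\<^sup>* j x} \<subseteq> S"
    proof
      assume "{x. R\<^sup>*\<^sup>* j x} \<subseteq> S"
      then have "{x. R\<^sup>*\<^sup>* j x} = S"
        using S(1) by blast
      then show False
        using Suc.prems S(3) by simp
    qed
    then obtain x where "R\<^sup>*\<^sup>* j x" "x \<notin> S"
      by blast
    then obtain u w where uw: "u \<in> S" "w \<notin> S" "R u w" "R\<^sup>*\<^sup>* j u"
      using rtranclp_leaves_set S(2) by metis
    let ?f = "f(w := u)" and ?h = "h(w := h u + 1)"
    have "\<forall>v\<in>insert w S - {j}. R v (?f v) \<and> ?h (?f v) < ?h v"
    proof
      fix v assume v: "v \<in> insert w S - {j}"
      show "R v (?f v) \<and> ?h (?f v) < ?h v"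
      proof (cases "v = w")
        case True
        then show ?thesis using uw sym by auto
      next
        case False
        then have "v \<in> S - {j}" "f v \<in> S"
          using v S(4) by auto
        then show ?thesis using False S(5) uw(2) by auto
      qed
    qed
    moreover have "?f \<in> (insert w S - {j}) \<rightarrow>\<^sub>E insert w S"
      using S(2,4) uw by (auto simp: PiE_def extensional_def Pi_def)
    ultimately show ?thesis
      using S(1-3) uw finS by (intro exI[of _ "insert w S"] exI[of _ ?f] exI[of _ ?h]) auto
  qed
qed

lemma finite_Kn_edges: "finite (Kn_edges n)"
  by (rule finite_subset[of _ "Pow {1..n}"]) (auto simp: Kn_edges_def)

lemma prob_all_open:
  assumes E: "E \<subseteq> Kn_edges n" and p: "\<forall>e\<in>Kn_edges n. 0 \<le> p e \<and> p e \<le> 1"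
  shows "measure_pmf.prob (random_graph n p) {\<omega>. \<forall>e\<in>E. \<omega> e} = (\<Prod>e\<in>E. p e)"
proof -
  define B where "B = (\<lambda>e. if e \<in> E then {True} else (UNIV :: bool set))"
  have eq: "{\<omega>. \<forall>e\<in>E. \<omega> e} = Pi (Kn_edges n) B"
    using E by (auto simp: B_def Pi_def)
  have "measure_pmf.prob (random_graph n p) {\<omega>. \<forall>e\<in>E. \<omega> e}
      = (\<Prod>e\<in>Kn_edges n. measure_pmf.prob (bernoulli_pmf (p e)) (B e))"
    unfolding eq random_graph_def by (rule measure_Pi_pmf_Pi[OF finite_Kn_edges])
  also have "\<dots> = (\<Prod>e\<in>Kn_edges n. if e \<in> E then p e else 1)"
    by (rule prod.cong) (use p in \<open>auto simp: B_def measure_pmf_single\<close>)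
  also have "\<dots> = (\<Prod>e\<in>E. p e)"
    using E by (simp add: prod.If_cases finite_Kn_edges Int_absorb1)
  finally show ?thesis .
qed

lemma open_component_subset:
  assumes "j \<in> {1..n}"
  shows "open_component n \<omega> j \<subseteq> {1..n}"
proof
  fix x assume "x \<in> open_component n \<omega> j"
  then have "(open_adj n \<omega>)\<^sup>*\<^sup>* j x"
    by (simp add: open_component_def)
  then show "x \<in> {1..n}"
    by (induction rule: rtranclp_induct) (use assms in \<open>auto simp: open_adj_def\<close>)
qed

text \<open>
  Rooted trees of \<open>K\<^sub>n\<close> on \<open>k\<close> vertices containing \<open>j\<close>, encoded by their parent maps. Only the
  two properties used by the first-moment bound are imposed (no loops, \<open>k - 1\<close> distinct
  edges), so some non-trees are counted as well; this only weakens the union bound.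
\<close>
definition parent_maps :: "nat \<Rightarrow> nat \<Rightarrow> nat \<Rightarrow> (nat set \<times> (nat \<Rightarrow> nat)) set" where
  "parent_maps n k j = {(S, f). S \<subseteq> {1..n} \<and> j \<in> S \<and> card S = k \<and> f \<in> (S - {j}) \<rightarrow>\<^sub>E S \<and>
      (\<forall>v\<in>S-{j}. f v \<noteq> v) \<and> inj_on (\<lambda>v. {v, f v}) (S - {j})}"

definition tree_edges_open :: "nat \<Rightarrow> nat set \<times> (nat \<Rightarrow> nat) \<Rightarrow> (nat set \<Rightarrow> bool) set" where
  "tree_edges_open j = (\<lambda>(S, f). {\<omega>. \<forall>v\<in>S-{j}. \<omega> {v, f v}})"

lemma parent_maps_subset_Sigma:
  "parent_maps n k j \<subseteq> Sigma {S. S \<subseteq> {1..n} \<and> j \<in> S \<and> card S = k} (\<lambda>S. (S - {j}) \<rightarrow>\<^sub>E S)"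
  unfolding parent_maps_def by auto

lemma finite_parent_maps: "finite (parent_maps n k j)"
  by (rule finite_subset[OF parent_maps_subset_Sigma])
     (auto intro!: finite_SigmaI finite_PiE intro: rev_finite_subset[OF finite_atLeastAtMost])

lemma card_parent_maps_le: "card (parent_maps n k j) \<le> (n choose k) * k ^ (k - 1)"
proof -
  define SS where "SS = {S. S \<subseteq> {1..n} \<and> j \<in> S \<and> card S = k}"
  have finSS: "finite SS"
    by (rule finite_subset[of _ "Pow {1..n}"]) (auto simp: SS_def)
  have finS: "finite S" if "S \<in> SS" for S
    using that unfolding SS_def by (metis (no_types, lifting) finite_atLeastAtMost finite_subset mem_Collect_eq)
  have finPi: "finite ((S - {j}) \<rightarrow>\<^sub>E S)" if "S \<in> SS" for S
    using finS[OF that] by (intro finite_PiE) simp_all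
  have "card (parent_maps n k j) \<le> card (Sigma SS (\<lambda>S. (S - {j}) \<rightarrow>\<^sub>E S))"
    unfolding SS_def by (intro card_mono parent_maps_subset_Sigma finite_SigmaI finSS[unfolded SS_def]
        finPi[unfolded SS_def])
  also have "\<dots> = (\<Sum>S\<in>SS. card ((S - {j}) \<rightarrow>\<^sub>E S))"
    using finPi by (intro card_SigmaI finSS) blast
  also have "\<dots> = (\<Sum>S\<in>SS. k ^ (k - 1))"
    using finS by (intro sum.cong) (auto simp: card_PiE SS_def)
  also have "\<dots> \<le> (n choose k) * k ^ (k - 1)"
  proof -
    have "card SS \<le> card {S. S \<subseteq> {1..n} \<and> card S = k}"
      by (rule card_mono) (auto simp: SS_def)
    then show ?thesis by (simp add: n_subsets)
  qed
  finally show ?thesis .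
qed

lemma large_component_has_open_tree:
  assumes j: "j \<in> {1..n}" and k: "1 \<le> k" "k \<le> card (open_component n \<omega> j)"
  shows "\<exists>x\<in>parent_maps n k j. \<omega> \<in> tree_edges_open j x"
proof -
  let ?R = "open_adj n \<omega>"
  have comp: "{x. ?R\<^sup>*\<^sup>* j x} \<subseteq> {1..n}"
    using open_component_subset[OF j] by (simp add: open_component_def)
  have sym: "?R a b \<Longrightarrow> ?R b a" for a b
    by (auto simp: open_adj_def insert_commute)
  have "k \<le> card {x. ?R\<^sup>*\<^sup>* j x}"
    using k(2) by (simp add: open_component_def)
  then obtain S f h where S: "S \<subseteq> {x. ?R\<^sup>*\<^sup>* j x}" "j \<in> S" "card S = k" "f \<in> (S - {j}) \<rightarrow>\<^sub>E S"
      and step: "\<forall>v\<in>S-{j}. ?R v (f v) \<and> h (f v) < (h v::nat)"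
    using exists_parent_map[OF finite_subset[OF comp] sym k(1)] by blast
  have "inj_on (\<lambda>v. {v, f v}) (S - {j})"
  proof (rule inj_onI, rule ccontr)
    fix v w assume vw: "v \<in> S - {j}" "w \<in> S - {j}" "{v, f v} = {w, f w}" "v \<noteq> w"
    then have "v = f w" "w = f v"
      by (auto simp: doubleton_eq_iff)
    then show False
      using step vw(1,2) by (metis less_asym)
  qed
  moreover have "\<forall>v\<in>S-{j}. f v \<noteq> v"
  proof
    fix v assume "v \<in> S - {j}"
    then have "open_adj n \<omega> v (f v)"
      using step by blast
    then show "f v \<noteq> v"
      by (auto simp: open_adj_def)
  qed
  ultimately have "(S, f) \<in> parent_maps n k j"
    using S comp by (auto simp: parent_maps_def)
  moreover have "\<omega> \<in> tree_edges_open j (S, f)"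
    using step by (auto simp: tree_edges_open_def open_adj_def)
  ultimately show ?thesis by blast
qed

lemma prob_tree_edges_open_le:
  assumes p: "\<forall>e\<in>Kn_edges n. 0 \<le> p e \<and> p e \<le> 1 \<and> p e \<le> c / real n"
    and x: "x \<in> parent_maps n k j"
  shows "measure_pmf.prob (random_graph n p) (tree_edges_open j x) \<le> (c / real n) ^ (k - 1)"
proof -
  obtain S f where x_eq: "x = (S, f)" by (cases x)
  have S: "S \<subseteq> {1..n}" "j \<in> S" "card S = k" "f \<in> (S - {j}) \<rightarrow>\<^sub>E S"
      "\<forall>v\<in>S-{j}. f v \<noteq> v" "inj_on (\<lambda>v. {v, f v}) (S - {j})"
    using x x_eq by (auto simp: parent_maps_def)
  define E where "E = (\<lambda>v. {v, f v}) ` (S - {j})"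
  have "finite S"
    using S(1) finite_subset by blast
  then have card_E: "card E = k - 1"
    unfolding E_def using card_image[OF S(6)] S(2,3) by simp
  have E_edges: "E \<subseteq> Kn_edges n"
  proof
    fix e assume "e \<in> E"
    then obtain v where v: "v \<in> S - {j}" "e = {v, f v}"
      unfolding E_def by blast
    have "f v \<in> S"
      using S(4) v(1) by (rule PiE_mem)
    then show "e \<in> Kn_edges n"
      using v S(1,5) unfolding Kn_edges_def by blast
  qed
  have "tree_edges_open j x = {\<omega>. \<forall>e\<in>E. \<omega> e}"
    unfolding x_eq tree_edges_open_def E_def by auto
  then have "measure_pmf.prob (random_graph n p) (tree_edges_open j x) = (\<Prod>e\<in>E. p e)"
    using prob_all_open[OF E_edges] p by simp
  also have "\<dots> \<le> (\<Prod>e\<in>E. c / real n)"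
    using p E_edges by (intro prod_mono) auto
  also have "\<dots> = (c / real n) ^ (k - 1)"
    using card_E by simp
  finally show ?thesis .
qed

lemma pow_div_fact_le_exp:
  fixes x :: real
  assumes "x \<ge> 0"
  shows "x ^ k / fact k \<le> exp x"
proof -
  have s: "(\<lambda>n. x ^ n / fact n) sums exp x"
    using exp_converges[of x] by (simp add: divide_inverse mult.commute scaleR_conv_of_real)
  have "(\<Sum>n\<in>{k}. x ^ n / fact n) \<le> (\<Sum>n. x ^ n / fact n)"
    by (rule sum_le_suminf) (use s assms in \<open>auto simp: sums_iff\<close>)
  then show ?thesis
    using s by (simp add: sums_iff)
qed

lemma binomial_mult_power_le: "real (n choose k) * real k ^ k \<le> (exp 1 * real n) ^ k"
proof -
  have binomial: "real (n choose k) * fact k \<le> real n ^ k"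
    using binomial_fact_pow[of n k] by (metis of_nat_fact of_nat_le_iff of_nat_mult of_nat_power)
  have power: "real k ^ k \<le> exp 1 ^ k * fact k"
    using pow_div_fact_le_exp[of "real k" k] exp_of_nat_mult[of k "1::real"] by (simp add: field_simps)
  have "(real (n choose k) * real k ^ k) * fact k = (real (n choose k) * fact k) * real k ^ k"
    by (simp add: mult_ac)
  also have "\<dots> \<le> real n ^ k * (exp 1 ^ k * fact k)"
    using binomial power by (intro mult_mono) auto
  also have "\<dots> = (exp 1 * real n) ^ k * fact k"
    by (simp add: power_mult_distrib mult_ac)
  finally show ?thesis
    by simp
qed

lemma first_moment_le:
  assumes "k \<ge> 1" "n \<ge> 1" "c \<ge> 0"
  shows "real n * (real (n choose k) * real k ^ (k - 1)) * (c / real n) ^ (k - 1)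
    \<le> exp 1 * real n ^ 2 * (exp 1 * c) ^ (k - 1)"
proof -
  obtain m where k: "k = Suc m"
    using assms(1) by (cases k) auto
  define N where "N = real n"
  have N: "N > 0"
    using assms(2) by (simp add: N_def)
  have "real (n choose k) * real k ^ m \<le> real (n choose k) * real k ^ k"
    using k by (intro mult_left_mono power_increasing) auto
  also have "\<dots> \<le> (exp 1 * N) ^ k"
    unfolding N_def by (rule binomial_mult_power_le)
  finally have "N * (real (n choose k) * real k ^ m) * (c / N) ^ m \<le> N * (exp 1 * N) ^ Suc m * (c / N) ^ m"
    using N assms(3) k by (intro mult_right_mono mult_left_mono) auto
  also have "\<dots> = exp 1 * N ^ 2 * (exp 1 * N * (c / N)) ^ m"
    by (simp only: power_Suc power_mult_distrib power2_eq_square mult_ac)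
  also have "\<dots> = exp 1 * N ^ 2 * (exp 1 * c) ^ m"
    using N by simp
  finally show ?thesis
    by (simp add: k N_def)
qed

lemma prob_large_component_le:
  assumes p: "\<forall>e\<in>Kn_edges n. 0 \<le> p e \<and> p e \<le> 1 \<and> p e \<le> c / real n"
    and "k \<ge> 1" "n \<ge> 1" "c \<ge> 0"
  shows "measure_pmf.prob (random_graph n p) {\<omega>. \<exists>j\<in>{1..n}. k \<le> card (open_component n \<omega> j)}
    \<le> exp 1 * real n ^ 2 * (exp 1 * c) ^ (k - 1)"
proof -
  let ?P = "measure_pmf.prob (random_graph n p)"
  have "?P {\<omega>. \<exists>j\<in>{1..n}. k \<le> card (open_component n \<omega> j)}
      \<le> ?P (\<Union>j\<in>{1..n}. \<Union>x\<in>parent_maps n k j. tree_edges_open j x)"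
    using large_component_has_open_tree \<open>k \<ge> 1\<close>
    by (intro measure_pmf.finite_measure_mono) auto
  also have "\<dots> \<le> (\<Sum>j\<in>{1..n}. \<Sum>x\<in>parent_maps n k j. ?P (tree_edges_open j x))"
    by (intro order_trans[OF measure_pmf.finite_measure_subadditive_finite] sum_mono
        measure_pmf.finite_measure_subadditive_finite) (auto simp: finite_parent_maps)
  also have "\<dots> \<le> (\<Sum>j\<in>{1..n}. \<Sum>x\<in>parent_maps n k j. (c / real n) ^ (k - 1))"
    by (intro sum_mono prob_tree_edges_open_le[OF p])
  also have "\<dots> = (\<Sum>j\<in>{1..n}. real (card (parent_maps n k j)) * (c / real n) ^ (k - 1))"
    by simp
  also have "\<dots> \<le> (\<Sum>j\<in>{1..n}. real ((n choose k) * k ^ (k - 1)) * (c / real n) ^ (k - 1))"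
    using \<open>c \<ge> 0\<close> by (intro sum_mono mult_right_mono of_nat_mono card_parent_maps_le) auto
  also have "\<dots> = real n * (real (n choose k) * real k ^ (k - 1)) * (c / real n) ^ (k - 1)"
    by simp
  also have "\<dots> \<le> exp 1 * real n ^ 2 * (exp 1 * c) ^ (k - 1)"
    using assms(2-4) by (rule first_moment_le)
  finally show ?thesis .
qed

lemma quadratic_times_geometric_le_powr:
  fixes q \<theta> :: real
  assumes q: "0 < q" "q < 1" and n: "real n \<ge> exp 1 / q"
    and m: "real m \<ge> (3 + \<theta>) / - ln q * ln (real n) - 1"
  shows "exp 1 * real n ^ 2 * q ^ m \<le> 1 / real n powr \<theta>"
proof -
  have lnq: "ln q < 0"
    using q by simp
  have "exp 1 / q > 0"
    using q by simp
  then have npos: "real n > 0"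
    using n by linarith
  have lnn: "ln (real n) \<ge> 1 - ln q"
    using n q npos ln_le_cancel_iff[of "exp 1 / q" "real n"] by (simp add: ln_div)
  have "real m * ln q \<le> ((3 + \<theta>) / - ln q * ln (real n) - 1) * ln q"
    using m lnq by (intro mult_right_mono_neg) auto
  also have "\<dots> = - (3 + \<theta>) * ln (real n) - ln q"
    using lnq by (simp add: field_simps)
  finally have "1 + 2 * ln (real n) + real m * ln q \<le> - \<theta> * ln (real n)"
    using lnn by (simp add: algebra_simps)
  then have "exp (1 + 2 * ln (real n) + real m * ln q) \<le> exp (- \<theta> * ln (real n))"
    by simp
  moreover have "exp (1 + 2 * ln (real n) + real m * ln q) = exp 1 * real n ^ 2 * q ^ m"
    using npos q exp_of_nat_mult[of 2 "ln (real n)"] exp_of_nat_mult[of m "ln q"] by (simp add: exp_add)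
  moreover have "exp (- \<theta> * ln (real n)) = 1 / real n powr \<theta>"
    using npos by (simp add: powr_def exp_minus field_simps)
  ultimately show ?thesis
    by simp
qed

lemma prob_small_components_ge:
  fixes c \<theta> :: real
  assumes p: "\<forall>e\<in>Kn_edges n. 0 \<le> p e \<and> p e \<le> 1 \<and> p e \<le> c / real n"
    and c: "0 < c" "exp 1 * c < 1" and "\<theta> \<ge> 0" and n: "real n \<ge> 1 / c"
  shows "measure_pmf.prob (random_graph n p)
      {\<omega>. \<forall>j\<in>{1..n}. real (card (open_component n \<omega> j)) \<le> (3 + \<theta>) / - ln (exp 1 * c) * ln (real n)}
    \<ge> 1 - 1 / real n powr \<theta>"
proof -
  define q where "q = exp 1 * c"
  define M where "M = (3 + \<theta>) / - ln q"
  define m where "m = nat \<lfloor>M * ln (real n)\<rfloor>"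
  let ?P = "measure_pmf.prob (random_graph n p)"
  let ?bad = "{\<omega>. \<exists>j\<in>{1..n}. Suc m \<le> card (open_component n \<omega> j)}"
  have q: "0 < q" "q < 1"
    using c by (auto simp: q_def)
  have "c \<le> exp 1 * c"
    using c by (simp add: mult_le_cancel_right1)
  then have "c < 1"
    using c by linarith
  then have "1 / c > 1"
    using c by simp
  then have n1: "n \<ge> 1" and "ln (real n) > 0"
    using n by auto
  moreover have "M \<ge> 0"
    using q \<open>\<theta> \<ge> 0\<close> by (simp add: M_def divide_nonneg_neg)
  ultimately have "M * ln (real n) \<ge> 0"
    by simp
  then have m: "real m \<le> M * ln (real n)" "real m \<ge> M * ln (real n) - 1"
    by (simp_all add: m_def)
  have "?P ?bad \<le> exp 1 * real n ^ 2 * q ^ m"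
    using prob_large_component_le[OF p, of "Suc m"] n1 c by (simp add: q_def)
  also have "\<dots> \<le> 1 / real n powr \<theta>"
    using q n m(2) c by (intro quadratic_times_geometric_le_powr) (auto simp: q_def M_def)
  finally have "1 - 1 / real n powr \<theta> \<le> ?P (UNIV - ?bad)"
    using measure_pmf.prob_compl[of ?bad "random_graph n p"] by simp
  also have "\<dots> \<le> ?P {\<omega>. \<forall>j\<in>{1..n}. real (card (open_component n \<omega> j)) \<le> M * ln (real n)}"
  proof (intro measure_pmf.finite_measure_mono subsetI CollectI ballI)
    fix \<omega> j assume "\<omega> \<in> UNIV - ?bad" "j \<in> {1..n}"
    then have "real (card (open_component n \<omega> j)) \<le> real m"
      by (auto simp: not_less_eq_eq)
    then show "real (card (open_component n \<omega> j)) \<le> M * ln (real n)"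
      using m(1) by linarith
  qed simp
  finally show ?thesis
    by (simp add: M_def q_def)
qed

theorem theorem2:
  fixes C \<theta> :: real and \<alpha> :: "nat \<Rightarrow> real"
  assumes "C > 0" and "C < exp (-1)" and "\<theta> > 0"
    and "\<And>n. \<alpha> n \<ge> 0" and "\<alpha> \<longlonglongrightarrow> 0"
  shows "\<exists>M>0. \<exists>L2>0. \<forall>n::nat. real n \<ge> L2 \<longrightarrow>
    (\<forall>p :: nat set \<Rightarrow> real.
       (\<forall>e\<in>Kn_edges n. 0 \<le> p e \<and> p e \<le> 1 \<and>
            (C - \<alpha> n) / real n \<le> p e \<and> p e \<le> (C + \<alpha> n) / real n) \<longrightarrow>
       measure_pmf.prob (random_graph n p)
         {\<omega>. \<forall>j\<in>{1..n}. real (card (open_component n \<omega> j)) \<le> M * ln (real n)}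
       \<ge> 1 - 1 / real n powr \<theta>)"
proof -
  obtain c where c: "C < c" "c < exp (-1)"
    using assms(2) dense by blast
  then have "exp 1 * c < exp 1 * exp (-1)"
    by simp
  then have ec: "0 < c" "exp 1 * c < 1"
    using c(1) assms(1) by (simp_all add: exp_minus)
  obtain N where N: "\<And>n. n \<ge> N \<Longrightarrow> \<alpha> n < c - C"
    using order_tendstoD(2)[OF assms(5), of "c - C"] c by (auto simp: eventually_sequentially)
  define M where "M = (3 + \<theta>) / - ln (exp 1 * c)"
  have "M > 0"
    using ec assms(3) by (simp add: M_def divide_pos_neg)
  moreover have "1 - 1 / real n powr \<theta> \<le> measure_pmf.prob (random_graph n p)
      {\<omega>. \<forall>j\<in>{1..n}. real (card (open_component n \<omega> j)) \<le> M * ln (real n)}"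
    if "real n \<ge> max (real N) (1 / c)"
      and p: "\<forall>e\<in>Kn_edges n. 0 \<le> p e \<and> p e \<le> 1 \<and> (C - \<alpha> n) / real n \<le> p e \<and> p e \<le> (C + \<alpha> n) / real n"
    for n p
  proof -
    have "(C + \<alpha> n) / real n \<le> c / real n"
      using N[of n] that(1) by (intro divide_right_mono) auto
    then show ?thesis
      unfolding M_def using p that(1) ec assms(3)
      by (intro prob_small_components_ge) force+
  qed
  moreover have "max (real N) (1 / c) > 0"
    using ec by (simp add: less_max_iff_disj)
  ultimately show ?thesis
    by blast
qed

end
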